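(* Let $p$ be an odd prime, let $r=(p-1)/2$, let $\zeta_p=e^{2\pi i/p}$, and let $\varepsilon=(-1)^{(p-1)/2}$. Let $Q$ be either $Q_1(x)=x^2/p$ or $Q_2(x)=cx^2/p$ with $c$ a fixed quadratic non-residue modulo $p$ (viewed as functions $\mathbb{Z}/p\mathbb{Z}\to\mathbb{Q}/\mathbb{Z}$). For $0\le j\le r$ put $\theta_j=e^{2\pi i Q(j)}$, let $T=\operatorname{diag}(\theta_0,\theta_1,\dots,\theta_r)$ be the $(r+1)\times(r+1)$ diagonal matrix, and let $V_Q$ be the $(r+1)\times(r+1)$ Vandermonde matrix whose $(j,k)$ entry is $\theta_j^{\,k}$ for $0\le j,k\le r$ (it is invertible since the $\theta_j$ are pairwise distinct). Then every entry of $T'=V_Q^{-1}TV_Q$ lies in $\mathbb{Z}\left[\frac{1}{2}(1+\sqrt{\varepsilon p})\right]$, the ring of integers of $\mathbb{Q}(\sqrt{\varepsilon p})$.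
   Context: Here $\sqrt{\varepsilon p}$ denotes $\sqrt{p}$ if $p\equiv 1 \pmod 4$ and $\sqrt{-p}=i\sqrt p$ if $p\equiv 3\pmod 4$; equivalently $\sqrt{\varepsilon p}=\sum_{x\in\mathbb{Z}/p\mathbb{Z}}\zeta_p^{x^2}$. *)

theory Defs
  imports "HOL-Number_Theory.Number_Theory" "Jordan_Normal_Form.Gauss_Jordan_Elimination"
begin

definition sqrt_eps :: "nat \<Rightarrow> complex" where
  "sqrt_eps p = (if p mod 4 = 1 then complex_of_real (sqrt (real p))
                 else \<i> * complex_of_real (sqrt (real p)))"

definition quad_ring :: "nat \<Rightarrow> complex set" where
  "quad_ring p = {of_int a + of_int b * ((1 + sqrt_eps p) / 2) | a b :: int. True}"

definition theta :: "nat \<Rightarrow> int \<Rightarrow> nat \<Rightarrow> complex" where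
  "theta p c j = cis (2 * pi * of_int (c * int j ^ 2) / real p)"

definition T_mat :: "nat \<Rightarrow> int \<Rightarrow> complex mat" where
  "T_mat p c = mat ((p - 1) div 2 + 1) ((p - 1) div 2 + 1)
      (\<lambda>(j, k). if j = k then theta p c j else 0)"

definition V_mat :: "nat \<Rightarrow> int \<Rightarrow> complex mat" where
  "V_mat p c = mat ((p - 1) div 2 + 1) ((p - 1) div 2 + 1)
      (\<lambda>(j, k). theta p c j ^ k)"

end

(*
  T V = V C, where V is the Vandermonde matrix of the theta_j and C is the companion matrix
  of P(X) = prod_j (X - theta_j); so V^-1 T V = C and it suffices that the coefficients of P lie
  in Z[(1 + sqrt(eps p))/2].  With zeta = exp(2 pi i/p) we have theta_j = zeta^(c j^2), and the
  exponents c j^2 mod p (0 <= j <= (p-1)/2) form a set A that is stable under multiplication by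
  quadratic residues.  Up to sign, the coefficient of X^i is the sum of zeta^(sum S) over the
  subsets S of A of size |A| - i; multiplying by a quadratic residue permutes these subsets, so
  the number of them with sum S = k (mod p) depends only on the Legendre symbol of k.  Hence the
  coefficient is an integer combination of 1, the Gaussian period eta = sum of zeta^k over the
  quadratic residues k, and the analogous sum over the non-residues, which is -1 - eta.  The Gauss
  sum 2 eta + 1 squares to eps p, so eta = (+-sqrt(eps p) - 1)/2 lies in the ring.
*)

theory Submission
  imports Defs "HOL-Computational_Algebra.Polynomial" "Jordan_Normal_Form.Determinant"
begin

section \<open>Products of linear factors and companion matrices\<close>

lemma coeff_prod_monic_linear:
  fixes f :: "'a \<Rightarrow> 'b::comm_ring_1"
  assumes "finite A"
  shows "coeff (\<Prod>a\<in>A. [:f a, 1:]) i = (\<Sum>S | S \<subseteq> A \<and> card S + i = card A. \<Prod>a\<in>S. f a)"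
proof -
  have card_le: "card S \<le> card A" if "S \<in> Pow A" for S
    using assms that by (simp add: card_mono)
  have "(\<Prod>a\<in>A. [:f a, 1:]) = (\<Prod>a\<in>A. [:f a:] + monom 1 1)"
    by (simp add: monom_Suc pCons_one)
  also have "\<dots> = (\<Sum>S\<in>Pow A. [:\<Prod>a\<in>S. f a:] * monom 1 (card (A - S)))"
    using assms by (simp add: prod_add prod_to_poly monom_power)
  also have "\<dots> = (\<Sum>S\<in>Pow A. monom (\<Prod>a\<in>S. f a) (card A - card S))"
    using assms by (intro sum.cong refl)
      (auto simp: mult_monom card_Diff_subset finite_subset simp flip: monom_0)
  finally have "coeff (\<Prod>a\<in>A. [:f a, 1:]) i
      = (\<Sum>S\<in>Pow A. if card S + i = card A then \<Prod>a\<in>S. f a else 0)"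
    using card_le by (auto simp: coeff_sum intro!: sum.cong)
  also have "\<dots> = (\<Sum>S | S \<subseteq> A \<and> card S + i = card A. \<Prod>a\<in>S. f a)"
    using assms by (simp add: sum.If_cases Int_def conj_commute)
  finally show ?thesis .
qed

lemma poly_monic_eq_sum:
  fixes P :: "'a::comm_semiring_1 poly"
  assumes "degree P = n" "coeff P n = 1"
  shows "poly P x = (\<Sum>i<n. coeff P i * x ^ i) + x ^ n"
proof -
  have "poly P x = (\<Sum>i<Suc n. coeff P i * x ^ i)"
    using assms(1) by (simp add: poly_altdef lessThan_Suc_atMost)
  then show ?thesis using assms(2) by simp
qed

lemma degree_prod_monic_linear:
  fixes t :: "nat \<Rightarrow> 'a::idom"
  shows "degree (\<Prod>j<n. [:- t j, 1:]) = n"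
  by (subst degree_prod_eq_sum_degree) simp_all

definition vandermonde_mat :: "nat \<Rightarrow> (nat \<Rightarrow> 'a::comm_semiring_1) \<Rightarrow> 'a mat" where
  "vandermonde_mat n t = mat n n (\<lambda>(j, k). t j ^ k)"

definition companion_mat :: "'a::comm_ring_1 poly \<Rightarrow> 'a mat" where
  "companion_mat P = mat (degree P) (degree P)
     (\<lambda>(i, k). if k + 1 < degree P then of_bool (i = k + 1) else - coeff P i)"

lemma vandermonde_mat_carrier [simp]: "vandermonde_mat n t \<in> carrier_mat n n"
  by (simp add: vandermonde_mat_def)

lemma det_vandermonde_mat_neq_0:
  fixes t :: "nat \<Rightarrow> 'a::field"
  assumes "inj_on t {..<n}"
  shows "det (vandermonde_mat n t) \<noteq> 0"
proof
  assume "det (vandermonde_mat n t) = 0"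
  then obtain v where v: "v \<in> carrier_vec n" "v \<noteq> 0\<^sub>v n" "vandermonde_mat n t *\<^sub>v v = 0\<^sub>v n"
    using det_0_iff_vec_prod_zero_field[OF vandermonde_mat_carrier] by auto
  define q where "q = (\<Sum>k<n. monom (v $ k) k)"
  have coeff_q: "coeff q k = (if k < n then v $ k else 0)" for k
    unfolding q_def coeff_sum coeff_monom by simp
  have "poly q (t j) = (vandermonde_mat n t *\<^sub>v v) $ j" if "j < n" for j
    using that v(1) by (simp add: q_def poly_sum poly_monom vandermonde_mat_def scalar_prod_def
        lessThan_atLeast0 mult.commute)
  then have roots: "poly q x = poly 0 x" if "x \<in> t ` {..<n}" for x
    using that v(3) by auto
  have "q = 0"
  proof (cases "n = 0")
    case False
    then have "degree q < n"
      using coeff_q by (intro le_less_trans[OF degree_le[of "n - 1"]]) auto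
    then have deg_q: "degree q < card (t ` {..<n})"
      using card_image[OF assms] by simp
    show ?thesis
      by (rule poly_eqI_degree[OF roots]) (use deg_q in auto)
  qed (simp add: q_def)
  then have "v $ k = 0" if "k < n" for k
    using coeff_q[of k] that by simp
  then have "v = 0\<^sub>v n"
    using v(1) by (intro eq_vecI) auto
  with v(2) show False ..
qed

lemma mat_diag_mult_vandermonde_mat:
  fixes t :: "nat \<Rightarrow> 'a::idom"
  shows "mat_diag n t * vandermonde_mat n t
         = vandermonde_mat n t * companion_mat (\<Prod>j<n. [:- t j, 1:])"
    (is "_ = ?V * companion_mat ?P")
proof -
  have deg: "degree ?P = n" by (rule degree_prod_monic_linear)
  moreover have "coeff ?P n = 1"
    using deg lead_coeff_prod[of "\<lambda>j. [:- t j, 1:]" "{..<n}"] by simp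
  moreover have "poly ?P (t a) = 0" if "a < n" for a
    using that by (auto simp: poly_prod intro: prod_zero)
  ultimately have root: "(\<Sum>i<n. coeff ?P i * t a ^ i) = - (t a ^ n)" if "a < n" for a
    using that poly_monic_eq_sum[of ?P n "t a"] by (simp add: eq_neg_iff_add_eq_0)
  show ?thesis
  proof (rule eq_matI)
    fix a b assume "a < dim_row (?V * companion_mat ?P)" "b < dim_col (?V * companion_mat ?P)"
    then have a: "a < n" and b: "b < n" by (simp_all add: deg companion_mat_def vandermonde_mat_def)
    have "(?V * companion_mat ?P) $$ (a, b)
        = (\<Sum>i<n. t a ^ i * (if b + 1 < n then of_bool (i = b + 1) else - coeff ?P i))"
      using a b deg by (simp add: vandermonde_mat_def companion_mat_def scalar_prod_def
          atLeast0LessThan)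
    also have "\<dots> = t a ^ (b + 1)"
    proof (cases "b + 1 < n")
      case True
      then have "{..<n} \<inter> {i. i = b + 1} = {b + 1}" by auto
      with True show ?thesis by simp
    next
      case False
      then have "b + 1 = n" using b by simp
      then show ?thesis
        using root[OF a] False by (simp add: sum_negf mult.commute)
    qed
    finally show "(mat_diag n t * ?V) $$ (a, b) = (?V * companion_mat ?P) $$ (a, b)"
      using a b by (simp add: mat_diag_mult_left[of _ n n] vandermonde_mat_def)
  qed (simp_all add: deg companion_mat_def vandermonde_mat_def mat_diag_def)
qed

lemma vandermonde_mat_similar_companion_mat:
  fixes t :: "nat \<Rightarrow> 'a::field"
  assumes "inj_on t {..<n}"
  shows "the (mat_inverse (vandermonde_mat n t)) * mat_diag n t * vandermonde_mat n t
         = companion_mat (\<Prod>j<n. [:- t j, 1:])"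
    (is "the (mat_inverse ?V) * ?D * ?V = ?C")
proof -
  have "?V \<in> Units (ring_mat TYPE('a) n ())"
    using det_vandermonde_mat_neq_0[OF assms] by (intro det_non_zero_imp_unit) simp
  then obtain B where "mat_inverse ?V = Some B"
    using mat_inverse(1)[of ?V n] by fastforce
  then have B: "B * ?V = 1\<^sub>m n" "B \<in> carrier_mat n n" and inv: "the (mat_inverse ?V) = B"
    using mat_inverse(2)[of ?V n] by auto
  have C: "?C \<in> carrier_mat n n"
    by (simp add: companion_mat_def degree_prod_monic_linear)
  have "B * ?D * ?V = B * (?D * ?V)"
    using B(2) by (simp add: assoc_mult_mat[of _ n n _ n _ n])
  also have "\<dots> = (B * ?V) * ?C"
    using B(2) C by (simp add: mat_diag_mult_vandermonde_mat assoc_mult_mat[of _ n n _ n _ n])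
  finally show ?thesis using B(1) C inv by simp
qed

section \<open>Roots of unity and the ring of integers of the quadratic subfield\<close>

definition unity_root :: "nat \<Rightarrow> int \<Rightarrow> complex" where
  "unity_root n k = cis (2 * pi * of_int k / real n)"

lemma unity_root_0 [simp]: "unity_root n 0 = 1"
  by (simp add: unity_root_def)

lemma unity_root_add: "unity_root n (a + b) = unity_root n a * unity_root n b"
  by (simp add: unity_root_def cis_mult add_divide_distrib distrib_left)

lemma unity_root_power: "unity_root n k ^ m = unity_root n (int m * k)"
  by (induction m) (simp_all add: unity_root_add algebra_simps)

lemma prod_unity_root: "(\<Prod>a\<in>S. unity_root n (f a)) = unity_root n (\<Sum>a\<in>S. f a)"
  by (induction S rule: infinite_finite_induct) (simp_all add: unity_root_add)

lemma unity_root_eq_1_iff: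
  assumes "n > 0"
  shows "unity_root n k = 1 \<longleftrightarrow> int n dvd k"
proof
  assume "unity_root n k = 1"
  then have "cos (2 * pi * of_int k / real n) = 1"
    unfolding unity_root_def by (metis cis.sel(1) one_complex.sel(1))
  then obtain m :: int where "2 * pi * of_int k / real n = of_int m * 2 * pi"
    using cos_one_2pi_int by blast
  then have "real_of_int k = real_of_int (m * int n)"
    using assms by (simp add: field_simps)
  then show "int n dvd k" by (simp only: of_int_eq_iff) simp
next
  assume "int n dvd k"
  then obtain m where "k = int n * m" ..
  with assms have "2 * pi * of_int k / real n = 2 * pi * of_int m"
    by simp
  then show "unity_root n k = 1"
    by (simp add: unity_root_def)
qed

lemma unity_root_eq_iff:
  assumes "n > 0"
  shows "unity_root n a = unity_root n b \<longleftrightarrow> [a = b] (mod int n)"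
proof -
  have "unity_root n a = unity_root n (a - b) * unity_root n b"
    by (simp flip: unity_root_add)
  moreover have "unity_root n b \<noteq> 0"
    by (simp add: unity_root_def)
  ultimately have "unity_root n a = unity_root n b \<longleftrightarrow> unity_root n (a - b) = 1"
    by auto
  with assms show ?thesis
    by (simp add: unity_root_eq_1_iff cong_iff_dvd_diff)
qed

lemma unity_root_mod [simp]: "unity_root n (k mod int n) = unity_root n k"
  by (cases "n = 0") (simp_all add: unity_root_eq_iff)

lemma sum_unity_root_mult:
  assumes "n > 0"
  shows "(\<Sum>a\<in>{0..<int n}. unity_root n (a * m)) = (if int n dvd m then of_nat n else 0)"
proof -
  have "{0..<int n} = int ` {..<n}"
    by (simp add: image_int_atLeastLessThan atLeast0LessThan[symmetric])
  then have "(\<Sum>a\<in>{0..<int n}. unity_root n (a * m)) = (\<Sum>i<n. unity_root n m ^ i)"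
    by (simp add: sum.reindex unity_root_power mult.commute)
  also have "\<dots> = (if int n dvd m then of_nat n else 0)"
  proof (cases "int n dvd m")
    case False
    moreover have "unity_root n m ^ n = 1"
      using assms by (simp add: unity_root_power unity_root_eq_1_iff)
    ultimately show ?thesis
      using assms by (simp add: unity_root_eq_1_iff sum_gp_strict)
  next
    case True
    then have "unity_root n m = 1"
      using assms by (simp add: unity_root_eq_1_iff)
    with True show ?thesis by simp
  qed
  finally show ?thesis .
qed

lemma sum_unity_root_group_mod:
  assumes "n > 0" "finite F"
  shows "(\<Sum>x\<in>F. unity_root n (g x))
       = (\<Sum>k\<in>{0..<int n}. of_nat (card {x \<in> F. [g x = k] (mod int n)}) * unity_root n k)"
proof -
  have "(\<Sum>x\<in>F. unity_root n (g x))
      = (\<Sum>k\<in>{0..<int n}. \<Sum>x\<in>{x \<in> F. g x mod int n = k}. unity_root n (g x))"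
    using assms by (intro sum.group[symmetric]) auto
  also have "\<dots> = (\<Sum>k\<in>{0..<int n}. \<Sum>x\<in>{x \<in> F. [g x = k] (mod int n)}. unity_root n k)"
  proof (rule sum.cong[OF refl])
    fix k assume "k \<in> {0..<int n}"
    then have "{x \<in> F. g x mod int n = k} = {x \<in> F. [g x = k] (mod int n)}"
      by (auto simp: cong_def)
    moreover have "(\<Sum>x\<in>{x \<in> F. g x mod int n = k}. unity_root n (g x))
        = (\<Sum>x\<in>{x \<in> F. g x mod int n = k}. unity_root n k)"
      by (rule sum.cong[OF refl]) (metis (mono_tags) mem_Collect_eq unity_root_mod)
    ultimately show "(\<Sum>x\<in>{x \<in> F. g x mod int n = k}. unity_root n (g x))
        = (\<Sum>x\<in>{x \<in> F. [g x = k] (mod int n)}. unity_root n k)"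
      by simp
  qed
  finally show ?thesis
    by simp
qed

lemma quad_ring_of_int [simp]: "of_int a \<in> quad_ring p"
  unfolding quad_ring_def by (rule CollectI, rule exI[of _ a], rule exI[of _ 0]) simp

lemma quad_ring_uminus:
  assumes "x \<in> quad_ring p"
  shows "- x \<in> quad_ring p"
proof -
  define \<omega> where "\<omega> = (1 + sqrt_eps p) / 2"
  from assms obtain a b where "x = of_int a + of_int b * \<omega>"
    unfolding quad_ring_def \<omega>_def by blast
  then have "- x = of_int (- a) + of_int (- b) * \<omega>"
    by (simp add: algebra_simps)
  then show ?thesis
    unfolding quad_ring_def \<omega>_def by blast
qed

lemma int_combination_in_quad_ring:
  assumes "(2 * w + 1) ^ 2 = sqrt_eps p ^ 2"
  shows "of_int a + of_int b * w \<in> quad_ring p"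
proof -
  define \<omega> where "\<omega> = (1 + sqrt_eps p) / 2"
  from assms have "sqrt_eps p = 2 * w + 1 \<or> sqrt_eps p = - (2 * w + 1)"
    unfolding power2_eq_iff by (metis minus_minus)
  then have "\<omega> = w + 1 \<or> \<omega> = - w"
  proof
    assume "sqrt_eps p = 2 * w + 1"
    show ?thesis
      unfolding \<omega>_def \<open>sqrt_eps p = 2 * w + 1\<close> by (simp add: field_simps)
  next
    assume "sqrt_eps p = - (2 * w + 1)"
    show ?thesis
      unfolding \<omega>_def \<open>sqrt_eps p = - (2 * w + 1)\<close> by (simp add: field_simps)
  qed
  then have "of_int a + of_int b * w = of_int (a - b) + of_int b * \<omega>
           \<or> of_int a + of_int b * w = of_int a + of_int (- b) * \<omega>"
    by (auto simp: algebra_simps)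
  then show ?thesis
    unfolding quad_ring_def \<omega>_def by blast
qed

section \<open>Quadratic residues modulo an odd prime\<close>

lemma sum_image_mult_mod_cong:
  fixes s n :: int
  assumes "inj_on (\<lambda>a. s * a mod n) S"
  shows "[\<Sum>((\<lambda>a. s * a mod n) ` S) = s * \<Sum>S] (mod n)"
proof -
  have "\<Sum>((\<lambda>a. s * a mod n) ` S) = (\<Sum>a\<in>S. s * a mod n)"
    using assms by (simp add: sum.reindex)
  also have "[\<dots> = (\<Sum>a\<in>S. s * a)] (mod n)"
    by (rule cong_sum) simp
  finally show ?thesis
    by (simp add: sum_distrib_left)
qed

lemma bij_betw_mult_mod:
  fixes s n :: int
  assumes "coprime s n" "B \<subseteq> {0..<n}" "\<And>b. b \<in> B \<Longrightarrow> s * b mod n \<in> B"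
  shows "bij_betw (\<lambda>b. s * b mod n) B B"
proof -
  have "inj_on (\<lambda>b. s * b mod n) B"
  proof (rule inj_onI)
    fix x y assume xy: "x \<in> B" "y \<in> B" "s * x mod n = s * y mod n"
    then have "[x = y] (mod n)"
      using assms(1) by (simp add: cong_mult_lcancel flip: cong_def)
    with xy(1,2) assms(2) show "x = y"
      by (intro cong_less_imp_eq_int) auto
  qed
  moreover have "finite B"
    using assms(2) finite_subset by blast
  ultimately show ?thesis
    using assms(3) by (simp add: bij_betw_def endo_inj_surj image_subsetI)
qed

locale odd_prime =
  fixes p :: nat
  assumes prime_p: "prime p" and odd_p: "odd p"
begin

lemma p_gt_2: "p > 2"
  using prime_ge_2_nat[OF prime_p] odd_p by (cases "p = 2") auto

definition half :: nat where
  "half = (p - 1) div 2"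

lemma p_eq: "p = 2 * half + 1"
  using odd_p by (auto simp: half_def elim!: oddE)

lemma int_p_eq: "int p = 2 * int half + 1"
  using odd_p by (auto simp: half_def elim!: oddE)

lemma prime_int_p: "prime (int p)"
  using prime_p by simp

lemma coprime_if_not_dvd: "\<not> int p dvd a \<Longrightarrow> coprime a (int p)"
  using prime_imp_coprime[OF prime_int_p] by (simp add: coprime_commute)

lemma Legendre_cong_power: "[Legendre a p = a ^ half] (mod int p)"
  using euler_criterion[OF prime_p p_gt_2] by (simp add: half_def)

lemma Legendre_eq_0_iff: "Legendre a p = 0 \<longleftrightarrow> int p dvd a"
  by (simp add: Legendre_def cong_0_iff)

lemma Legendre_eq_1_iff: "\<not> int p dvd a \<Longrightarrow> Legendre a p = 1 \<longleftrightarrow> QuadRes p a"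
  by (simp add: Legendre_def cong_0_iff)

lemma Legendre_cases: "\<not> int p dvd a \<Longrightarrow> Legendre a p = 1 \<or> Legendre a p = -1"
  by (simp add: Legendre_def cong_0_iff)

lemma Legendre_cong:
  assumes "[a = b] (mod int p)"
  shows "Legendre a p = Legendre b p"
proof -
  have "QuadRes p a \<longleftrightarrow> QuadRes p b"
    unfolding QuadRes_def using assms cong_sym cong_trans by meson
  moreover have "[a = 0] (mod int p) \<longleftrightarrow> [b = 0] (mod int p)"
    using assms cong_sym cong_trans by meson
  ultimately show ?thesis
    unfolding Legendre_def by simp
qed

lemma Legendre_mod [simp]: "Legendre (a mod int p) p = Legendre a p"
  by (rule Legendre_cong) simp

lemma Legendre_one [simp]: "Legendre 1 p = 1"
proof -
  have "QuadRes p 1"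
    unfolding QuadRes_def by (rule exI[of _ 1]) simp
  with p_gt_2 show ?thesis
    by (simp add: Legendre_eq_1_iff)
qed

lemma sign_eq_if_cong:
  fixes x y :: int
  assumes "x \<in> {-1, 0, 1}" "y \<in> {-1, 0, 1}" "[x = y] (mod int p)"
  shows "x = y"
proof -
  have "int p dvd (x - y)" "\<bar>x - y\<bar> < int p"
    using assms p_gt_2 by (auto simp: cong_iff_dvd_diff)
  then show ?thesis
    using dvd_imp_le_int[of "x - y" "int p"] by (cases "x = y") auto
qed

lemma Legendre_range: "Legendre a p \<in> {-1, 0, 1}"
  by (simp add: Legendre_def)

lemma Legendre_mult: "Legendre (a * b) p = Legendre a p * Legendre b p"
proof (rule sign_eq_if_cong)
  show "Legendre a p * Legendre b p \<in> {-1, 0, 1}"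
    using Legendre_range[of a] Legendre_range[of b] by auto
  have "[Legendre (a * b) p = a ^ half * b ^ half] (mod int p)"
    using Legendre_cong_power[of "a * b"] by (simp add: power_mult_distrib)
  also have "[a ^ half * b ^ half = Legendre a p * Legendre b p] (mod int p)"
    using cong_mult[OF Legendre_cong_power[of a] Legendre_cong_power[of b]] by (simp add: cong_sym)
  finally show "[Legendre (a * b) p = Legendre a p * Legendre b p] (mod int p)" .
qed (rule Legendre_range)

lemma Legendre_minus_one: "Legendre (-1) p = (-1) ^ half"
  by (rule sign_eq_if_cong[OF Legendre_range _ Legendre_cong_power])
     (cases "even half"; simp)

lemma square_rep_exists:
  obtains x where "0 \<le> x" "x \<le> int half" "[x ^ 2 = y ^ 2] (mod int p)"
proof -
  define u where "u = y mod int p"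
  have u: "0 \<le> u" "u < int p" "[u ^ 2 = y ^ 2] (mod int p)"
    using p_gt_2 by (simp_all add: u_def cong_pow)
  show ?thesis
  proof (cases "u \<le> int half")
    case True
    with u that show ?thesis by blast
  next
    case False
    have "(int p - u) ^ 2 = u ^ 2 + int p * (int p - 2 * u)"
      by (simp add: power2_eq_square algebra_simps)
    then have "[(int p - u) ^ 2 = u ^ 2] (mod int p)"
      by (simp add: cong_def)
    then have "[(int p - u) ^ 2 = y ^ 2] (mod int p)"
      using u(3) by (rule cong_trans)
    moreover have "0 \<le> int p - u" "int p - u \<le> int half"
      using u False int_p_eq by linarith+
    ultimately show ?thesis
      by (intro that)
  qed
qed

lemma square_mult_cong_imp_eq:
  assumes "\<not> int p dvd c" "0 \<le> x" "x \<le> int half" "0 \<le> y" "y \<le> int half"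
    and "[c * x ^ 2 = c * y ^ 2] (mod int p)"
  shows "x = y"
proof -
  have "int p dvd c * ((x - y) * (x + y))"
    using assms(6) by (simp add: cong_iff_dvd_diff power2_eq_square algebra_simps)
  then have "int p dvd (x - y) \<or> int p dvd (x + y)"
    using assms(1) prime_int_p by (simp add: prime_dvd_mult_iff)
  moreover have "\<bar>x - y\<bar> < int p" "0 \<le> x + y" "x + y < int p"
    unfolding abs_less_iff using assms(2-5) int_p_eq by linarith+
  ultimately have "x - y = 0 \<or> x + y = 0"
    using dvd_imp_le_int[of "x - y" "int p"] dvd_imp_le_int[of "x + y" "int p"] by fastforce
  with assms(2,4) show ?thesis by auto
qed

abbreviation nonzero_residues :: "int set" where
  "nonzero_residues \<equiv> {1..<int p}"

abbreviation quad_residues :: "int set" where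
  "quad_residues \<equiv> {k \<in> nonzero_residues. Legendre k p = 1}"

abbreviation quad_nonresidues :: "int set" where
  "quad_nonresidues \<equiv> {k \<in> nonzero_residues. Legendre k p = -1}"

lemma not_dvd_if_nonzero_residue: "k \<in> nonzero_residues \<Longrightarrow> \<not> int p dvd k"
  using zdvd_imp_le by fastforce

lemma mult_mod_mem_nonzero_residues:
  assumes "a \<in> nonzero_residues" "b \<in> nonzero_residues"
  shows "a * b mod int p \<in> nonzero_residues"
proof -
  have "\<not> int p dvd a * b"
    using assms not_dvd_if_nonzero_residue prime_int_p by (simp add: prime_dvd_mult_iff)
  then have "a * b mod int p \<noteq> 0"
    by (simp add: dvd_eq_mod_eq_0)
  moreover have "0 \<le> a * b mod int p" "a * b mod int p < int p"
    using p_gt_2 by simp_all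
  ultimately show ?thesis
    by simp
qed

lemma finite_quad_residues: "finite quad_residues"
  by (rule finite_subset[of _ nonzero_residues]) auto

lemma finite_quad_nonresidues: "finite quad_nonresidues"
  by (rule finite_subset[of _ nonzero_residues]) auto

lemma nonzero_residues_eq_Un: "nonzero_residues = quad_residues \<union> quad_nonresidues"
  using Legendre_cases not_dvd_if_nonzero_residue by blast

lemma sum_nonzero_residues_split:
  "(\<Sum>k\<in>nonzero_residues. g k) = (\<Sum>k\<in>quad_residues. g k) + (\<Sum>k\<in>quad_nonresidues. g k)"
proof -
  have "(\<Sum>k\<in>quad_residues \<union> quad_nonresidues. g k)
      = (\<Sum>k\<in>quad_residues. g k) + (\<Sum>k\<in>quad_nonresidues. g k)"
    using finite_quad_residues finite_quad_nonresidues by (rule sum.union_disjoint) auto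
  then show ?thesis
    by (simp only: flip: nonzero_residues_eq_Un)
qed

lemma square_mod_mem_quad_residues:
  assumes "\<not> int p dvd x"
  shows "x ^ 2 mod int p \<in> quad_residues"
proof -
  have "\<not> int p dvd x ^ 2 mod int p"
    using assms prime_int_p by (simp add: prime_dvd_power_iff dvd_mod_iff)
  moreover have "QuadRes p (x ^ 2 mod int p)"
    unfolding QuadRes_def by (intro exI[of _ x]) simp
  moreover have "x ^ 2 mod int p \<noteq> 0"
    using calculation(1) by auto
  moreover have "0 \<le> x ^ 2 mod int p" "x ^ 2 mod int p < int p"
    using p_gt_2 by simp_all
  ultimately show ?thesis
    using Legendre_eq_1_iff[of "x ^ 2 mod int p"] by auto
qed

lemma quad_residues_eq_squares:
  "quad_residues = (\<lambda>x. x ^ 2 mod int p) ` {1..int half}"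
proof
  show "quad_residues \<subseteq> (\<lambda>x. x ^ 2 mod int p) ` {1..int half}"
  proof
    fix k assume k: "k \<in> quad_residues"
    then have "\<not> int p dvd k"
      using not_dvd_if_nonzero_residue by blast
    with k obtain y where y: "[y ^ 2 = k] (mod int p)"
      using Legendre_eq_1_iff unfolding QuadRes_def by blast
    obtain x where x: "0 \<le> x" "x \<le> int half" "[x ^ 2 = y ^ 2] (mod int p)"
      by (rule square_rep_exists)
    with y have "[x ^ 2 = k] (mod int p)"
      using cong_trans by blast
    have "x \<noteq> 0"
    proof
      assume "x = 0"
      with \<open>[x ^ 2 = k] (mod int p)\<close> have "[k = 0] (mod int p)"
        by (simp add: cong_sym)
      with \<open>\<not> int p dvd k\<close> show False
        by (simp add: cong_0_iff)
    qed
    moreover have "x ^ 2 mod int p = k"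
      using \<open>[x ^ 2 = k] (mod int p)\<close> k by (simp add: cong_def)
    ultimately show "k \<in> (\<lambda>x. x ^ 2 mod int p) ` {1..int half}"
      using x(1,2) by (intro image_eqI[of _ _ x]) auto
  qed
  show "(\<lambda>x. x ^ 2 mod int p) ` {1..int half} \<subseteq> quad_residues"
  proof (rule image_subsetI)
    fix x assume "x \<in> {1..int half}"
    then have "1 \<le> x" "x < int p"
      using int_p_eq by simp_all
    then show "x ^ 2 mod int p \<in> quad_residues"
      by (intro square_mod_mem_quad_residues) (auto dest: zdvd_imp_le)
  qed
qed

lemma card_quad_residues: "card quad_residues = half"
proof -
  have "inj_on (\<lambda>x. x ^ 2 mod int p) {1..int half}"
  proof (rule inj_onI)
    fix x y assume "x \<in> {1..int half}" "y \<in> {1..int half}" "x ^ 2 mod int p = y ^ 2 mod int p"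
    then show "x = y"
      using p_gt_2 by (intro square_mult_cong_imp_eq[of 1]) (auto simp: cong_def)
  qed
  then show ?thesis
    unfolding quad_residues_eq_squares by (simp add: card_image)
qed

lemma card_quad_nonresidues: "card quad_nonresidues = half"
proof -
  have "card (quad_residues \<union> quad_nonresidues) = card quad_residues + card quad_nonresidues"
    using finite_quad_residues finite_quad_nonresidues by (rule card_Un_disjoint) auto
  then have "card nonzero_residues = card quad_residues + card quad_nonresidues"
    by (simp only: flip: nonzero_residues_eq_Un)
  moreover have "card nonzero_residues = 2 * half"
    using int_p_eq by simp
  ultimately show ?thesis
    using card_quad_residues by linarith
qed

lemma sum_Legendre: "(\<Sum>k\<in>nonzero_residues. Legendre k p) = 0"
  using card_quad_residues card_quad_nonresidues by (simp add: sum_nonzero_residues_split)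

section \<open>Gaussian periods and the Gauss sum\<close>

lemma sum_nonzero_residues_unity_root_mult:
  "(\<Sum>a\<in>nonzero_residues. unity_root p (a * m)) = (if int p dvd m then of_nat p else 0) - 1"
proof -
  have "{0..<int p} = insert 0 nonzero_residues"
    using p_gt_2 by auto
  then have "(\<Sum>a\<in>{0..<int p}. unity_root p (a * m))
      = 1 + (\<Sum>a\<in>nonzero_residues. unity_root p (a * m))"
    by simp
  then show ?thesis
    using sum_unity_root_mult[of p m] p_gt_2 by simp
qed

definition gaussian_period :: complex where
  "gaussian_period = (\<Sum>k\<in>quad_residues. unity_root p k)"

definition gauss_sum :: complex where
  "gauss_sum = (\<Sum>k\<in>nonzero_residues. of_int (Legendre k p) * unity_root p k)"

lemma sum_quad_nonresidues_unity_root: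
  "(\<Sum>k\<in>quad_nonresidues. unity_root p k) = - 1 - gaussian_period"
proof -
  have "gaussian_period + (\<Sum>k\<in>quad_nonresidues. unity_root p k) = - 1"
    using sum_nonzero_residues_unity_root_mult[of 1] p_gt_2
    by (simp add: sum_nonzero_residues_split gaussian_period_def)
  then show ?thesis
    by (simp add: algebra_simps)
qed

lemma gauss_sum_eq: "gauss_sum = 2 * gaussian_period + 1"
proof -
  have "(\<Sum>k\<in>quad_residues. of_int (Legendre k p) * unity_root p k) = gaussian_period"
    unfolding gaussian_period_def by (rule sum.cong) simp_all
  moreover have "(\<Sum>k\<in>quad_nonresidues. of_int (Legendre k p) * unity_root p k)
      = - (\<Sum>k\<in>quad_nonresidues. unity_root p k)"
    by (simp add: sum_negf)
  ultimately show ?thesis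
    unfolding gauss_sum_def sum_nonzero_residues_split sum_quad_nonresidues_unity_root by simp
qed

lemma bij_betw_mult_mod_nonzero_residues:
  assumes "a \<in> nonzero_residues"
  shows "bij_betw (\<lambda>t. a * t mod int p) nonzero_residues nonzero_residues"
  using assms by (intro bij_betw_mult_mod coprime_if_not_dvd not_dvd_if_nonzero_residue
      mult_mod_mem_nonzero_residues) auto

lemma Legendre_unity_root_mult_gauss_sum:
  assumes a: "a \<in> nonzero_residues"
  shows "of_int (Legendre a p) * unity_root p a * gauss_sum
       = (\<Sum>t\<in>nonzero_residues. of_int (Legendre t p) * unity_root p (a * (1 + t)))"
proof -
  have "Legendre a p * Legendre a p = 1"
    using Legendre_cases[OF not_dvd_if_nonzero_residue[OF a]] by auto
  then have "of_int (Legendre a p) * of_int (Legendre (a * t) p) = complex_of_int (Legendre t p)"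
    for t by (simp add: Legendre_mult flip: of_int_mult)
  then show ?thesis
    unfolding gauss_sum_def sum_distrib_left
    by (subst sum.reindex_bij_betw[OF bij_betw_mult_mod_nonzero_residues[OF a], symmetric])
       (simp add: unity_root_add algebra_simps)
qed

lemma gauss_sum_square: "gauss_sum ^ 2 = of_int (Legendre (-1) p) * of_nat p"
proof -
  let ?L = "\<lambda>k. complex_of_int (Legendre k p)"
  have "gauss_sum ^ 2 = (\<Sum>a\<in>nonzero_residues. ?L a * unity_root p a * gauss_sum)"
    unfolding power2_eq_square by (subst (1) gauss_sum_def) (simp add: sum_distrib_right)
  also have "\<dots> = (\<Sum>a\<in>nonzero_residues. \<Sum>t\<in>nonzero_residues.
                        ?L t * unity_root p (a * (1 + t)))"
    by (rule sum.cong[OF refl]) (rule Legendre_unity_root_mult_gauss_sum)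
  also have "\<dots> = (\<Sum>t\<in>nonzero_residues.
                        ?L t * (\<Sum>a\<in>nonzero_residues. unity_root p (a * (1 + t))))"
    by (subst sum.swap) (simp add: sum_distrib_left)
  also have "\<dots> = (\<Sum>t\<in>nonzero_residues. (if t = int p - 1 then ?L t * of_nat p else 0) - ?L t)"
  proof (rule sum.cong)
    fix t assume t: "t \<in> nonzero_residues"
    then have "int p dvd (1 + t) \<longleftrightarrow> t = int p - 1"
      using zdvd_imp_le[of "int p" "1 + t"] by auto
    then show "?L t * (\<Sum>a\<in>nonzero_residues. unity_root p (a * (1 + t)))
        = (if t = int p - 1 then ?L t * of_nat p else 0) - ?L t"
      unfolding sum_nonzero_residues_unity_root_mult by (simp add: algebra_simps)
  qed simp
  also have "\<dots> = ?L (int p - 1) * of_nat p - of_int (\<Sum>t\<in>nonzero_residues. Legendre t p)"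
    using p_gt_2 by (simp add: sum_subtractf)
  also have "\<dots> = ?L (-1) * of_nat p"
    using Legendre_cong[of "int p - 1" "-1"] by (simp add: sum_Legendre cong_iff_dvd_diff)
  finally show ?thesis .
qed

lemma sqrt_eps_square: "sqrt_eps p ^ 2 = of_int (Legendre (-1) p) * of_nat p"
proof -
  have "complex_of_real (sqrt (real p)) ^ 2 = of_nat p"
    by (simp flip: of_real_power)
  moreover have "p mod 4 = 1 \<longleftrightarrow> even half"
  proof -
    obtain h where "half = h" by blast
    with p_eq show ?thesis by presburger
  qed
  ultimately show ?thesis
    by (auto simp: sqrt_eps_def Legendre_minus_one power_mult_distrib)
qed

lemma gaussian_period_int_combination_in_quad_ring:
  "of_int a + of_int b * gaussian_period \<in> quad_ring p"
  by (rule int_combination_in_quad_ring)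
     (simp add: gauss_sum_square sqrt_eps_square flip: gauss_sum_eq)

section \<open>Subset sums of residue-stable sets of roots of unity\<close>

lemma Legendre_eq_imp_residue_multiplier:
  assumes "\<not> int p dvd a" "\<not> int p dvd b" "Legendre a p = Legendre b p"
  obtains s where "QuadRes p s" "\<not> int p dvd s" "[s * b = a] (mod int p)"
proof -
  obtain x where x: "[b * x = 1] (mod int p)"
    using cong_solve_coprime_int[OF coprime_if_not_dvd[OF assms(2)]] by blast
  have "Legendre b p * Legendre x p = 1"
    using Legendre_cong[OF x] by (simp add: Legendre_mult)
  then have "Legendre (a * x) p = 1"
    by (simp add: Legendre_mult assms(3))
  then have "QuadRes p (a * x)" "\<not> int p dvd a * x"
    using Legendre_eq_0_iff[of "a * x"] Legendre_eq_1_iff[of "a * x"] by auto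
  moreover have "[a * x * b = a] (mod int p)"
    using cong_mult[OF cong_refl[of a] x] by (simp add: mult_ac)
  ultimately show ?thesis
    by (rule that)
qed

lemma quad_nonresidues_nonempty: "quad_nonresidues \<noteq> {}"
proof
  assume "quad_nonresidues = {}"
  then have "half = 0"
    by (metis card.empty card_quad_nonresidues)
  with p_eq p_gt_2 show False
    by simp
qed

lemma residue_invariant_sum_in_quad_ring:
  fixes f :: "int \<Rightarrow> int"
  assumes f: "\<And>s k. QuadRes p s \<Longrightarrow> \<not> int p dvd s \<Longrightarrow> k \<in> nonzero_residues
                 \<Longrightarrow> f (s * k mod int p) = f k"
  shows "(\<Sum>k\<in>{0..<int p}. of_int (f k) * unity_root p k) \<in> quad_ring p"
proof -
  have f_eq: "f a = f b"
    if ab: "a \<in> nonzero_residues" "b \<in> nonzero_residues" "Legendre a p = Legendre b p" for a b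
  proof -
    obtain s where s: "QuadRes p s" "\<not> int p dvd s" "[s * b = a] (mod int p)"
      using ab(3)
      by (rule Legendre_eq_imp_residue_multiplier[OF ab(1,2)[THEN not_dvd_if_nonzero_residue]])
    then have "s * b mod int p = a"
      using ab(1) by (simp add: cong_def)
    with f[OF s(1,2) ab(2)] show ?thesis
      by simp
  qed
  obtain k0 where k0: "k0 \<in> quad_nonresidues"
    using quad_nonresidues_nonempty by blast
  let ?g = "\<lambda>k. of_int (f k) * unity_root p k"
  have "?g k = of_int (f 1) * unity_root p k" if "k \<in> quad_residues" for k
    using that p_gt_2 f_eq[of k 1] by simp
  then have "(\<Sum>k\<in>quad_residues. ?g k) = of_int (f 1) * gaussian_period"
    unfolding gaussian_period_def sum_distrib_left by (rule sum.cong[OF refl])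
  moreover have "?g k = of_int (f k0) * unity_root p k" if "k \<in> quad_nonresidues" for k
    using that k0 f_eq[of k k0] by simp
  then have "(\<Sum>k\<in>quad_nonresidues. ?g k) = of_int (f k0) * (- 1 - gaussian_period)"
    unfolding sum_quad_nonresidues_unity_root[symmetric] sum_distrib_left by (rule sum.cong[OF refl])
  moreover have "{0..<int p} = insert 0 nonzero_residues"
    using p_gt_2 by auto
  ultimately have "(\<Sum>k\<in>{0..<int p}. ?g k)
      = of_int (f 0 - f k0) + of_int (f 1 - f k0) * gaussian_period"
    by (simp add: sum_nonzero_residues_split algebra_simps)
  then show ?thesis
    by (simp only: gaussian_period_int_combination_in_quad_ring)
qed

lemma card_subsets_sum_cong_mult_invariant:
  assumes A: "A \<subseteq> {0..<int p}" and s: "\<not> int p dvd s"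
    and stable: "\<And>a. a \<in> A \<Longrightarrow> s * a mod int p \<in> A"
  shows "card {S. S \<subseteq> A \<and> P (card S) \<and> [\<Sum>S = s * k] (mod int p)}
       = card {S. S \<subseteq> A \<and> P (card S) \<and> [\<Sum>S = k] (mod int p)}"
proof -
  define \<phi> where "\<phi> = (\<lambda>a. s * a mod int p)"
  have "bij_betw \<phi> A A"
    unfolding \<phi>_def using coprime_if_not_dvd[OF s] A stable by (rule bij_betw_mult_mod)
  then have inj: "inj_on \<phi> A" and image: "\<phi> ` A = A"
    by (auto simp: bij_betw_def)
  have card_image_\<phi>: "card (\<phi> ` S) = card S" if "S \<subseteq> A" for S
    using inj_on_subset[OF inj that] by (rule card_image)
  have sum_image_\<phi>: "[\<Sum>(\<phi> ` S) = s * \<Sum>S] (mod int p)" if "S \<subseteq> A" for S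
    using inj_on_subset[OF inj that] unfolding \<phi>_def by (rule sum_image_mult_mod_cong)
  define F where "F k = {S. S \<subseteq> A \<and> P (card S) \<and> [\<Sum>S = k] (mod int p)}" for k
  have "image \<phi> ` F k = F (s * k)"
  proof (intro equalityI subsetI)
    fix T assume "T \<in> image \<phi> ` F k"
    then obtain S where S: "S \<subseteq> A" "P (card S)" "[\<Sum>S = k] (mod int p)" "T = \<phi> ` S"
      by (auto simp: F_def)
    have "[\<Sum>T = s * k] (mod int p)"
      using sum_image_\<phi>[OF S(1)] cong_scalar_left[OF S(3), of s] S(4) by (auto intro: cong_trans)
    with S image show "T \<in> F (s * k)"
      by (auto simp: F_def card_image_\<phi>)
  next
    fix T assume T: "T \<in> F (s * k)"
    then obtain S where S: "S \<subseteq> A" "T = \<phi> ` S"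
      using image subset_image_iff[of T \<phi> A] by (auto simp: F_def)
    have "[s * \<Sum>S = s * k] (mod int p)"
      using T S sum_image_\<phi>[OF S(1)] by (auto simp: F_def intro: cong_trans cong_sym)
    then have "[\<Sum>S = k] (mod int p)"
      using cong_mult_lcancel[OF coprime_if_not_dvd[OF s]] by blast
    with S T show "T \<in> image \<phi> ` F k"
      by (auto simp: F_def card_image_\<phi>)
  qed
  moreover have "inj_on (image \<phi>) (F k)"
    by (rule inj_on_subset[OF inj_on_image_Pow[OF inj]]) (auto simp: F_def)
  ultimately show ?thesis
    unfolding F_def[symmetric] by (metis card_image)
qed

lemma coeff_prod_unity_root_in_quad_ring:
  assumes A: "A \<subseteq> {0..<int p}"
    and stable: "\<And>s a. QuadRes p s \<Longrightarrow> \<not> int p dvd s \<Longrightarrow> a \<in> A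
                   \<Longrightarrow> s * a mod int p \<in> A"
  shows "coeff (\<Prod>a\<in>A. [:- unity_root p a, 1:]) i \<in> quad_ring p"
proof -
  have fin: "finite A"
    using A finite_subset by blast
  define F where "F = {S. S \<subseteq> A \<and> card S + i = card A}"
  define N where "N k = int (card {S. S \<subseteq> A \<and> card S + i = card A \<and> [\<Sum>S = k] (mod int p)})"
    for k
  have "finite F"
    using fin by (intro finite_subset[of F "Pow A"]) (auto simp: F_def)
  have "coeff (\<Prod>a\<in>A. [:- unity_root p a, 1:]) i = (\<Sum>S\<in>F. \<Prod>a\<in>S. - unity_root p a)"
    unfolding F_def by (rule coeff_prod_monic_linear[OF fin])
  also have "\<dots> = (-1) ^ (card A - i) * (\<Sum>S\<in>F. unity_root p (\<Sum>S))"
    unfolding sum_distrib_left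
  proof (rule sum.cong[OF refl])
    fix S assume "S \<in> F"
    then have "card S + i = card A"
      by (simp add: F_def)
    then have "card S = card A - i"
      by linarith
    then show "(\<Prod>a\<in>S. - unity_root p a) = (-1) ^ (card A - i) * unity_root p (\<Sum>S)"
      by (simp add: prod_uminus prod_unity_root)
  qed
  also have "(\<Sum>S\<in>F. unity_root p (\<Sum>S)) = (\<Sum>k\<in>{0..<int p}. of_int (N k) * unity_root p k)"
    using p_gt_2 \<open>finite F\<close> by (simp add: sum_unity_root_group_mod N_def F_def)
  finally have coeff_eq: "coeff (\<Prod>a\<in>A. [:- unity_root p a, 1:]) i
      = (-1) ^ (card A - i) * (\<Sum>k\<in>{0..<int p}. of_int (N k) * unity_root p k)" .
  have "(\<Sum>k\<in>{0..<int p}. of_int (N k) * unity_root p k) \<in> quad_ring p"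
  proof (rule residue_invariant_sum_in_quad_ring)
    fix s k assume s: "QuadRes p s" "\<not> int p dvd s"
    have "card {S. S \<subseteq> A \<and> card S + i = card A \<and> [\<Sum>S = s * k] (mod int p)}
        = card {S. S \<subseteq> A \<and> card S + i = card A \<and> [\<Sum>S = k] (mod int p)}"
      by (rule card_subsets_sum_cong_mult_invariant[OF A s(2) stable[OF s]])
    then show "N (s * k mod int p) = N k"
      by (simp add: N_def)
  qed
  then show ?thesis
    unfolding coeff_eq by (cases "even (card A - i)") (simp_all add: quad_ring_uminus)
qed

definition scaled_squares :: "int \<Rightarrow> int set" where
  "scaled_squares c = (\<lambda>j. c * int j ^ 2 mod int p) ` {..half}"

lemma scaled_squares_mult_closed:
  assumes "QuadRes p s" "a \<in> scaled_squares c"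
  shows "s * a mod int p \<in> scaled_squares c"
proof -
  obtain j where a: "a = c * int j ^ 2 mod int p"
    using assms(2) unfolding scaled_squares_def by blast
  obtain y where y: "[y ^ 2 = s] (mod int p)"
    using assms(1) unfolding QuadRes_def by blast
  obtain x where x: "0 \<le> x" "x \<le> int half" "[x ^ 2 = (y * int j) ^ 2] (mod int p)"
    by (rule square_rep_exists)
  have "[s * a = y ^ 2 * (c * int j ^ 2)] (mod int p)"
    unfolding a using cong_mult[OF cong_sym[OF y] cong_mod_left[THEN iffD2, OF cong_refl]] .
  also have "y ^ 2 * (c * int j ^ 2) = c * (y * int j) ^ 2"
    by (simp add: power_mult_distrib)
  also have "[\<dots> = c * x ^ 2] (mod int p)"
    using cong_mult[OF cong_refl[of c] cong_sym[OF x(3)]] .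
  finally have "s * a mod int p = c * int (nat x) ^ 2 mod int p"
    using x(1) by (simp add: cong_def)
  with x(1,2) show ?thesis
    unfolding scaled_squares_def by (intro image_eqI[of _ _ "nat x"]) auto
qed

lemma inj_on_scaled_squares:
  assumes "\<not> int p dvd c"
  shows "inj_on (\<lambda>j. c * int j ^ 2 mod int p) {..half}"
proof (rule inj_onI)
  fix j k assume "j \<in> {..half}" "k \<in> {..half}" "c * int j ^ 2 mod int p = c * int k ^ 2 mod int p"
  then have "int j = int k"
    by (intro square_mult_cong_imp_eq[OF assms]) (auto simp: cong_def)
  then show "j = k"
    by simp
qed

lemma theta_eq_unity_root: "theta p c j = unity_root p (c * int j ^ 2)"
  by (simp add: theta_def unity_root_def)

lemma inj_on_theta:
  assumes "\<not> int p dvd c"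
  shows "inj_on (theta p c) {..<half + 1}"
proof (rule inj_onI)
  fix j k assume "j \<in> {..<half + 1}" "k \<in> {..<half + 1}" "theta p c j = theta p c k"
  then show "j = k"
    using inj_on_scaled_squares[OF assms] p_gt_2
    by (auto simp: inj_on_def theta_eq_unity_root unity_root_eq_iff cong_def)
qed

lemma coeff_prod_theta_in_quad_ring:
  assumes "\<not> int p dvd c"
  shows "coeff (\<Prod>j<half + 1. [:- theta p c j, 1:]) i \<in> quad_ring p"
proof -
  have "(\<Prod>j<half + 1. [:- theta p c j, 1:]) = (\<Prod>a\<in>scaled_squares c. [:- unity_root p a, 1:])"
    unfolding scaled_squares_def
    by (simp add: prod.reindex[OF inj_on_scaled_squares[OF assms]] theta_eq_unity_root
        lessThan_Suc_atMost)
  moreover have "scaled_squares c \<subseteq> {0..<int p}"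
    using p_gt_2 by (auto simp: scaled_squares_def)
  ultimately show ?thesis
    using scaled_squares_mult_closed by (simp add: coeff_prod_unity_root_in_quad_ring)
qed

lemma not_dvd_if_one_or_nonresidue:
  assumes "c = 1 \<or> \<not> QuadRes p c"
  shows "\<not> int p dvd c"
proof
  assume "int p dvd c"
  then have "QuadRes p c"
    unfolding QuadRes_def by (intro exI[of _ 0]) (simp add: cong_def dvd_eq_mod_eq_0)
  moreover have "c \<noteq> 1"
    using \<open>int p dvd c\<close> p_gt_2 by auto
  ultimately show False
    using assms by simp
qed

end

theorem theorem1:
  fixes p :: nat and c :: int
  assumes "prime p" and "odd p"
    and "c = 1 \<or> \<not> QuadRes (int p) c"
  shows "\<forall>j < (p - 1) div 2 + 1. \<forall>k < (p - 1) div 2 + 1.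
           (the (mat_inverse (V_mat p c)) * T_mat p c * V_mat p c) $$ (j, k) \<in> quad_ring p"
proof -
  interpret odd_prime p
    using assms(1,2) by unfold_locales
  have c: "\<not> int p dvd c"
    using assms(3) by (rule not_dvd_if_one_or_nonresidue)
  define P where "P = (\<Prod>j<half + 1. [:- theta p c j, 1:])"
  have "V_mat p c = vandermonde_mat (half + 1) (theta p c)"
    by (simp add: V_mat_def vandermonde_mat_def half_def)
  moreover have "T_mat p c = mat_diag (half + 1) (theta p c)"
    by (rule eq_matI) (auto simp: T_mat_def mat_diag_def half_def)
  ultimately have "the (mat_inverse (V_mat p c)) * T_mat p c * V_mat p c = companion_mat P"
    unfolding P_def using vandermonde_mat_similar_companion_mat[OF inj_on_theta[OF c]] by simp
  moreover have "degree P = half + 1"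
    unfolding P_def by (rule degree_prod_monic_linear)
  moreover have "coeff P i \<in> quad_ring p" for i
    unfolding P_def using c by (rule coeff_prod_theta_in_quad_ring)
  ultimately show ?thesis
    using quad_ring_of_int[of 0 p] quad_ring_of_int[of 1 p]
    by (auto simp: companion_mat_def half_def quad_ring_uminus)
qed

end
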